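(* Let $M$ be an end-decisive MM-QFA that accepts $L$ with bounded error and let $M'$ be an end-decisive MM-QFA that accepts $L'$ with bounded error. Then there exists an MM-QFA $M''$ that accepts $L\cup L'$ with bounded error.
   Context: A measure-many quantum finite automaton (MM-QFA) over $\Sigma$ is a tuple $(Q,\Sigma,\{U_\sigma\}_{\sigma\in\Sigma\cup\{\$\}},q_0,Q_{acc},Q_{rej})$ with $Q$ finite indexing an orthonormal basis of $\mathbb{C}^Q$, end-marker $\$\notin\Sigma$, unitary $U_\sigma$, initial state $q_0$, and $Q$ partitioned into $Q_{acc},Q_{rej},Q_{non}$ with orthogonal projections $P_{acc},P_{rej},P_{non}$. On input $x$ it processes $x\$$ maintaining $(\psi,p_{acc},p_{rej})$, initially $(|q_0\rangle,0,0)$; on reading $\sigma$: $\psi'=U_\sigma\psi$, $p_{acc}\mathrel{+}=\|P_{acc}\psi'\|^2$, $p_{rej}\mathrel{+}=\|P_{rej}\psi'\|^2$, $\psi\leftarrow P_{non}\psi'$; the acceptance probability $p(x)$ is the final $p_{acc}$. It is end-decisive if $P_{acc}\psi'=0$ after reading every non-end-marker symbol, on every input. It accepts $L$ with bounded error if for some $\lambda$ and $\epsilon>0$, $p(x)>\lambda+\epsilon$ for $x\in L$ and $p(x)<\lambda-\epsilon$ for $x\notin L$. *)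

theory Defs
  imports Complex_Main
begin

text \<open>The state set Q is {0..<dim}, indexing the
standard orthonormal basis of C^dim. Input symbols are Some a; the end-marker is None.
trans s is the matrix (i,j) of the unitary U_s.\<close>

datatype 'a mmqfa = MMQFA
  (dim: nat) (trans: "'a option \<Rightarrow> nat \<Rightarrow> nat \<Rightarrow> complex")
  (init: nat) (accs: "nat set") (rejs: "nat set")

definition unitary_mat :: "nat \<Rightarrow> (nat \<Rightarrow> nat \<Rightarrow> complex) \<Rightarrow> bool" where
  "unitary_mat n U \<longleftrightarrow>
     (\<forall>i<n. \<forall>j<n. (\<Sum>k<n. cnj (U k i) * U k j) = (if i = j then 1 else 0))"

definition wf_mmqfa :: "'a mmqfa \<Rightarrow> bool" where
  "wf_mmqfa M \<longleftrightarrow> init M < dim M \<and> accs M \<subseteq> {..<dim M} \<and> rejs M \<subseteq> {..<dim M}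
     \<and> accs M \<inter> rejs M = {} \<and> (\<forall>s. unitary_mat (dim M) (trans M s))"

definition mat_vec :: "nat \<Rightarrow> (nat \<Rightarrow> nat \<Rightarrow> complex) \<Rightarrow> (nat \<Rightarrow> complex) \<Rightarrow> (nat \<Rightarrow> complex)" where
  "mat_vec n U v = (\<lambda>i. if i < n then (\<Sum>j<n. U i j * v j) else 0)"

definition proj :: "nat set \<Rightarrow> (nat \<Rightarrow> complex) \<Rightarrow> (nat \<Rightarrow> complex)" where
  "proj S v = (\<lambda>i. if i \<in> S then v i else 0)"

definition norm2 :: "nat \<Rightarrow> (nat \<Rightarrow> complex) \<Rightarrow> real" where
  "norm2 n v = (\<Sum>i<n. (cmod (v i))\<^sup>2)"

definition non_states :: "'a mmqfa \<Rightarrow> nat set" where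
  "non_states M = {..<dim M} - accs M - rejs M"

definition init_vec :: "'a mmqfa \<Rightarrow> (nat \<Rightarrow> complex)" where
  "init_vec M = (\<lambda>i. if i = init M then 1 else 0)"

definition step :: "'a mmqfa \<Rightarrow> 'a option \<Rightarrow> (nat \<Rightarrow> complex) \<times> real \<times> real
                     \<Rightarrow> (nat \<Rightarrow> complex) \<times> real \<times> real" where
  "step M s cfg = (case cfg of (psi, pa, pr) \<Rightarrow>
     (let psi' = mat_vec (dim M) (trans M s) psi in
       (proj (non_states M) psi',
        pa + norm2 (dim M) (proj (accs M) psi'),
        pr + norm2 (dim M) (proj (rejs M) psi'))))"

definition run :: "'a mmqfa \<Rightarrow> 'a option list \<Rightarrow> (nat \<Rightarrow> complex) \<times> real \<times> real" where
  "run M ss = fold (step M) ss (init_vec M, 0, 0)"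

definition acc_prob :: "'a mmqfa \<Rightarrow> 'a list \<Rightarrow> real" where
  "acc_prob M x = fst (snd (run M (map Some x @ [None])))"

definition end_decisive :: "'a mmqfa \<Rightarrow> bool" where
  "end_decisive M \<longleftrightarrow> (\<forall>w a.
     proj (accs M) (mat_vec (dim M) (trans M (Some a)) (fst (run M (map Some w)))) = (\<lambda>_. 0))"

definition accepts_bounded :: "'a mmqfa \<Rightarrow> 'a list set \<Rightarrow> bool" where
  "accepts_bounded M L \<longleftrightarrow> (\<exists>lam eps. eps > 0 \<and>
     (\<forall>x. x \<in> L \<longrightarrow> acc_prob M x > lam + eps) \<and>
     (\<forall>x. x \<notin> L \<longrightarrow> acc_prob M x < lam - eps))"

end

theory Submission
  imports Defs
begin

text \<open>Since \<open>M\<close> and \<open>M'\<close> are end-decisive, running them in tensor product multiplies their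
  acceptance probabilities, so \<open>m\<close>-fold tensor powers accept with probabilities \<open>p\<^sup>m\<close> and
  \<open>p'\<^sup>m\<close>. If \<open>p > a\<close> on \<open>L\<close> and \<open>p < b\<close> off \<open>L\<close> with \<open>0 < b < a\<close>, and likewise
  for \<open>p'\<close>, then for large \<open>m\<close> the rejection thresholds become negligible:
  \<open>(b/a)\<^sup>m + (b'/a')\<^sup>m < 1\<close>. An automaton running both powers in superposition accepts with
  probability \<open>w p\<^sup>m + (1 - w) p'\<^sup>m\<close>; with weights chosen so that \<open>w a\<^sup>m = (1 - w) a'\<^sup>m = T\<close>,
  this exceeds \<open>T\<close> on \<open>L \<union> L'\<close> and stays below \<open>T ((b/a)\<^sup>m + (b'/a')\<^sup>m) < T\<close> elsewhere.
  The argument needs \<open>b, b' > 0\<close>, which holds unless \<open>L\<close> or \<open>L'\<close> is the full language, and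
  then \<open>M\<close> itself will do.\<close>

section \<open>Matrices\<close>

definition inner_vec :: "nat \<Rightarrow> (nat \<Rightarrow> complex) \<Rightarrow> (nat \<Rightarrow> complex) \<Rightarrow> complex" where
  "inner_vec n u v = (\<Sum>i<n. cnj (u i) * v i)"

definition mat_mult :: "nat \<Rightarrow> (nat \<Rightarrow> nat \<Rightarrow> complex) \<Rightarrow> (nat \<Rightarrow> nat \<Rightarrow> complex)
    \<Rightarrow> nat \<Rightarrow> nat \<Rightarrow> complex" where
  "mat_mult n A B = (\<lambda>i j. \<Sum>k<n. A i k * B k j)"

lemma unitary_mat_iff_inner_vec:
  "unitary_mat n U \<longleftrightarrow>
     (\<forall>i<n. \<forall>j<n. inner_vec n (\<lambda>k. U k i) (\<lambda>k. U k j) = (if i = j then 1 else 0))"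
  by (simp add: unitary_mat_def inner_vec_def)

lemma norm2_eq_inner_vec: "complex_of_real (norm2 n v) = inner_vec n v v"
  unfolding norm2_def inner_vec_def of_real_sum
  by (intro sum.cong refl) (simp add: complex_norm_square mult.commute del: of_real_power)

lemma mat_vec_outside: "n \<le> i \<Longrightarrow> mat_vec n U v i = 0"
  by (simp add: mat_vec_def)

lemma mat_vec_mat_mult: "mat_vec n (mat_mult n A B) v = mat_vec n A (mat_vec n B v)"
proof
  fix i
  have "(\<Sum>j<n. (\<Sum>k<n. A i k * B k j) * v j) = (\<Sum>k<n. A i k * (\<Sum>j<n. B k j * v j))"
    by (simp add: sum_distrib_left sum_distrib_right mult.assoc) (rule sum.swap)
  then show "mat_vec n (mat_mult n A B) v i = mat_vec n A (mat_vec n B v) i"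
    by (simp add: mat_vec_def mat_mult_def)
qed

lemma inner_vec_unitary:
  assumes "unitary_mat n U"
  shows "inner_vec n (mat_vec n U u) (mat_vec n U v) = inner_vec n u v"
proof -
  have "inner_vec n (mat_vec n U u) (mat_vec n U v)
      = (\<Sum>i<n. \<Sum>l<n. \<Sum>j<n. (cnj (u j) * v l) * (cnj (U i j) * U i l))"
    unfolding inner_vec_def
    by (intro sum.cong refl) (simp add: mat_vec_def cnj_sum sum_product ac_simps)
  also have "\<dots> = (\<Sum>l<n. \<Sum>j<n. \<Sum>i<n. (cnj (u j) * v l) * (cnj (U i j) * U i l))"
    by (subst sum.swap, rule sum.cong[OF refl], rule sum.swap)
  also have "\<dots> = (\<Sum>l<n. \<Sum>j<n. if j = l then cnj (u j) * v l else 0)"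
    using assms by (intro sum.cong refl) (simp add: unitary_mat_def flip: sum_distrib_left)
  also have "\<dots> = inner_vec n u v"
    by (simp add: inner_vec_def)
  finally show ?thesis .
qed

lemma norm2_unitary: "unitary_mat n U \<Longrightarrow> norm2 n (mat_vec n U v) = norm2 n v"
  using inner_vec_unitary[of n U v v] by (simp flip: norm2_eq_inner_vec)

lemma unitary_mat_mult:
  assumes A: "unitary_mat n A" and B: "unitary_mat n B"
  shows "unitary_mat n (mat_mult n A B)"
  unfolding unitary_mat_iff_inner_vec
proof (intro allI impI)
  fix i j assume "i < n" "j < n"
  have col: "inner_vec n (\<lambda>k. mat_mult n A B k i) (\<lambda>k. mat_mult n A B k j)
      = inner_vec n (mat_vec n A (\<lambda>k. B k i)) (mat_vec n A (\<lambda>k. B k j))"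
    by (simp add: inner_vec_def mat_vec_def mat_mult_def)
  show "inner_vec n (\<lambda>k. mat_mult n A B k i) (\<lambda>k. mat_mult n A B k j) = (if i = j then 1 else 0)"
    using B \<open>i < n\<close> \<open>j < n\<close> unfolding col inner_vec_unitary[OF A] unitary_mat_iff_inner_vec by blast
qed

lemma sum_lessThan_add:
  "(\<Sum>i<m + n. f i) = (\<Sum>i<m. f i) + (\<Sum>i<n. f (m + i) :: 'a :: comm_monoid_add)"
  for m n :: nat
  by (induct n) (simp_all add: add_ac)

definition dsum_vec :: "nat \<Rightarrow> nat \<Rightarrow> (nat \<Rightarrow> complex) \<Rightarrow> (nat \<Rightarrow> complex) \<Rightarrow> nat \<Rightarrow> complex" where
  "dsum_vec m n u v = (\<lambda>i. if i < m then u i else if i < m + n then v (i - m) else 0)"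

definition block_diag :: "nat \<Rightarrow> (nat \<Rightarrow> nat \<Rightarrow> complex) \<Rightarrow> (nat \<Rightarrow> nat \<Rightarrow> complex)
    \<Rightarrow> nat \<Rightarrow> nat \<Rightarrow> complex" where
  "block_diag m A B = (\<lambda>i j. if i < m \<and> j < m then A i j
     else if m \<le> i \<and> m \<le> j then B (i - m) (j - m) else 0)"

lemma mat_vec_block_diag:
  "mat_vec (m + n) (block_diag m A B) (dsum_vec m n u v) = dsum_vec m n (mat_vec m A u) (mat_vec n B v)"
  by (rule ext) (simp add: mat_vec_def sum_lessThan_add block_diag_def dsum_vec_def)

lemma unitary_block_diag:
  assumes A: "unitary_mat m A" and B: "unitary_mat n B"
  shows "unitary_mat (m + n) (block_diag m A B)"
  unfolding unitary_mat_def
proof (intro allI impI)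
  fix i j assume "i < m + n" "j < m + n"
  moreover have "i - m = j - m \<longleftrightarrow> i = j" if "m \<le> i" "m \<le> j" using that by arith
  ultimately show "(\<Sum>k<m + n. cnj (block_diag m A B k i) * block_diag m A B k j) = (if i = j then 1 else 0)"
    using A B unfolding unitary_mat_def
    by (cases "i < m"; cases "j < m") (simp_all add: sum_lessThan_add block_diag_def)
qed

lemma proj_dsum_vec:
  assumes "S \<subseteq> {..<m}"
  shows "proj (S \<union> (+) m ` T) (dsum_vec m n u v) = dsum_vec m n (proj S u) (proj T v)"
proof
  fix i
  have "i \<in> (+) m ` T \<longleftrightarrow> m \<le> i \<and> i - m \<in> T" by force
  then show "proj (S \<union> (+) m ` T) (dsum_vec m n u v) i = dsum_vec m n (proj S u) (proj T v) i"
    using assms by (auto simp: proj_def dsum_vec_def)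
qed

lemma dsum_vec_zero_right: "\<forall>i\<ge>m. u i = 0 \<Longrightarrow> dsum_vec m n u (\<lambda>_. 0) = u"
  by (rule ext) (simp add: dsum_vec_def)

lemma norm2_dsum_vec: "norm2 (m + n) (dsum_vec m n u v) = norm2 m u + norm2 n v"
  by (simp add: norm2_def sum_lessThan_add dsum_vec_def)

definition scale_vec :: "complex \<Rightarrow> (nat \<Rightarrow> complex) \<Rightarrow> nat \<Rightarrow> complex" where
  "scale_vec c v = (\<lambda>i. c * v i)"

lemma mat_vec_scale_vec: "mat_vec n U (scale_vec c v) = scale_vec c (mat_vec n U v)"
  by (auto simp: mat_vec_def scale_vec_def sum_distrib_left ac_simps)

lemma proj_scale_vec: "proj S (scale_vec c v) = scale_vec c (proj S v)"
  by (auto simp: proj_def scale_vec_def)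

lemma norm2_scale_vec: "norm2 n (scale_vec c v) = (cmod c)\<^sup>2 * norm2 n v"
  by (simp add: norm2_def scale_vec_def norm_mult power_mult_distrib sum_distrib_left)

text \<open>The basis index \<open>(i, j)\<close> of \<open>\<complex>^m \<otimes> \<complex>^n\<close> is encoded as \<open>i * n + j\<close>.\<close>

lemma sum_lessThan_mult:
  "(\<Sum>x<m * n. f x) = (\<Sum>i<m. \<Sum>j<n. f (i * n + j) :: 'a :: comm_monoid_add)"
  for m n :: nat
  by (induct m) (simp_all add: sum_lessThan_add add.commute[of n])

lemma pair_index_less:
  assumes "i < m" "j < n"
  shows "i * n + j < m * (n::nat)" and "j + i * n < m * n"
proof -
  have "i * n + j < Suc i * n" using \<open>j < n\<close> by simp
  also have "\<dots> \<le> m * n" using \<open>i < m\<close> by (intro mult_right_mono) auto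
  finally show "i * n + j < m * n" "j + i * n < m * n" by simp_all
qed

lemma pair_index_eq_iff: "j < n \<Longrightarrow> x = i * n + j \<longleftrightarrow> x div n = i \<and> x mod n = (j::nat)"
  using div_mult_mod_eq[of x n] by auto

lemma pair_index_div_mod_less:
  assumes "x < m * (n::nat)"
  shows "x div n < m" and "x mod n < n"
  using assms by (simp_all add: less_mult_imp_div_less) (metis mod_less_divisor mult_0_right not_less_zero gr0I)

definition kron_mat :: "nat \<Rightarrow> (nat \<Rightarrow> nat \<Rightarrow> complex) \<Rightarrow> (nat \<Rightarrow> nat \<Rightarrow> complex)
    \<Rightarrow> nat \<Rightarrow> nat \<Rightarrow> complex" where
  "kron_mat n A B = (\<lambda>x y. A (x div n) (y div n) * B (x mod n) (y mod n))"

definition kron_vec :: "nat \<Rightarrow> nat \<Rightarrow> (nat \<Rightarrow> complex) \<Rightarrow> (nat \<Rightarrow> complex) \<Rightarrow> nat \<Rightarrow> complex" where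
  "kron_vec m n u v = (\<lambda>x. if x < m * n then u (x div n) * v (x mod n) else 0)"

definition kron_set :: "nat \<Rightarrow> nat \<Rightarrow> nat set \<Rightarrow> nat set \<Rightarrow> nat set" where
  "kron_set m n S T = {x. x < m * n \<and> x div n \<in> S \<and> x mod n \<in> T}"

lemma kron_vec_zero_left [simp]: "kron_vec m n (\<lambda>_. 0) v = (\<lambda>_. 0)"
  by (rule ext) (simp add: kron_vec_def)

lemma mat_vec_kron:
  "mat_vec (m * n) (kron_mat n A B) (kron_vec m n u v) = kron_vec m n (mat_vec m A u) (mat_vec n B v)"
proof
  fix x
  have "(\<Sum>y<m * n. kron_mat n A B x y * kron_vec m n u v y)
      = (\<Sum>i<m. \<Sum>j<n. (A (x div n) i * u i) * (B (x mod n) j * v j))"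
    unfolding sum_lessThan_mult
    by (intro sum.cong refl) (simp add: kron_mat_def kron_vec_def pair_index_less ac_simps)
  then show "mat_vec (m * n) (kron_mat n A B) (kron_vec m n u v) x
      = kron_vec m n (mat_vec m A u) (mat_vec n B v) x"
    by (simp add: mat_vec_def kron_vec_def pair_index_div_mod_less sum_product)
qed

lemma proj_kron: "proj (kron_set m n S T) (kron_vec m n u v) = kron_vec m n (proj S u) (proj T v)"
  by (auto simp: proj_def kron_vec_def kron_set_def)

lemma norm2_kron: "norm2 (m * n) (kron_vec m n u v) = norm2 m u * norm2 n v"
  unfolding norm2_def sum_lessThan_mult sum_product
  by (intro sum.cong refl) (simp add: kron_vec_def pair_index_less norm_mult power_mult_distrib)

lemma unitary_kron:
  assumes A: "unitary_mat m A" and B: "unitary_mat n B"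
  shows "unitary_mat (m * n) (kron_mat n A B)"
  unfolding unitary_mat_def
proof (intro allI impI)
  fix x y assume x: "x < m * n" and y: "y < m * n"
  have "(\<Sum>z<m * n. cnj (kron_mat n A B z x) * kron_mat n A B z y)
      = (\<Sum>i<m. cnj (A i (x div n)) * A i (y div n)) * (\<Sum>j<n. cnj (B j (x mod n)) * B j (y mod n))"
    unfolding sum_lessThan_mult sum_product
    by (intro sum.cong refl) (simp add: kron_mat_def ac_simps)
  also have "\<dots> = (if x div n = y div n \<and> x mod n = y mod n then 1 else 0)"
    using A B pair_index_div_mod_less[OF x] pair_index_div_mod_less[OF y]
    by (simp add: unitary_mat_def)
  also have "\<dots> = (if x = y then 1 else 0)"
    by (metis div_mult_mod_eq)
  finally show "(\<Sum>z<m * n. cnj (kron_mat n A B z x) * kron_mat n A B z y) = (if x = y then 1 else 0)" .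
qed

lemma complex_of_real_sum_squares:
  "c\<^sup>2 + s\<^sup>2 = 1 \<Longrightarrow> complex_of_real c * c + complex_of_real s * s = 1"
  by (metis of_real_1 of_real_add of_real_mult power2_eq_square)

definition givens :: "nat \<Rightarrow> nat \<Rightarrow> real \<Rightarrow> real \<Rightarrow> nat \<Rightarrow> nat \<Rightarrow> complex" where
  "givens a b c s = (\<lambda>i j. if i = j then (if i = a \<or> i = b then of_real c else 1)
     else if i = b \<and> j = a then of_real s else if i = a \<and> j = b then - of_real s else 0)"

lemma sum_split_two:
  fixes n :: nat
  assumes "a < n" "b < n" "a \<noteq> b"
  shows "(\<Sum>k<n. f k) = f a + f b + (\<Sum>k\<in>{..<n} - {a, b}. f k :: 'a :: comm_monoid_add)"
proof -
  have "(\<Sum>k<n. f k) = f a + (\<Sum>k\<in>{..<n} - {a}. f k)"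
    using assms by (intro sum.remove) auto
  also have "(\<Sum>k\<in>{..<n} - {a}. f k) = f b + (\<Sum>k\<in>{..<n} - {a} - {b}. f k)"
    using assms by (intro sum.remove) auto
  also have "{..<n} - {a} - {b} = {..<n} - {a, b}" by auto
  finally show ?thesis by (simp add: add.assoc)
qed

lemma mat_vec_givens:
  assumes ab: "a < n" "b < n" "a \<noteq> b"
  shows "mat_vec n (givens a b c s) y = (\<lambda>i. if i < n then
     (if i = a then c * y a - s * y b else if i = b then s * y a + c * y b else y i) else 0)"
proof
  fix i
  have rest: "(\<Sum>j\<in>{..<n} - {a, b}. givens a b c s i j * y j) = (if i \<notin> {a, b} \<and> i < n then y i else 0)"
    by (simp add: givens_def if_distrib[of "\<lambda>x. x * y _"] cong: if_cong)
  show "mat_vec n (givens a b c s) y i = (if i < n then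
     (if i = a then c * y a - s * y b else if i = b then s * y a + c * y b else y i) else 0)"
  proof (cases "i < n")
    case True
    then show ?thesis
      unfolding mat_vec_def sum_split_two[OF ab] rest using ab
      by (cases "i = a"; cases "i = b") (simp_all add: givens_def)
  qed (simp add: mat_vec_def)
qed

lemma unitary_givens:
  assumes ab: "a < n" "b < n" "a \<noteq> b" and cs: "c\<^sup>2 + s\<^sup>2 = 1"
  shows "unitary_mat n (givens a b c s)"
  unfolding unitary_mat_def
proof (intro allI impI)
  fix i j assume "i < n" "j < n"
  have rest: "(\<Sum>k\<in>{..<n} - {a, b}. cnj (givens a b c s k i) * givens a b c s k j)
      = (if i \<notin> {a, b} \<and> i = j then 1 else 0)"
    using \<open>i < n\<close> by (simp add: givens_def if_distrib[of "\<lambda>x. cnj x * _"] cong: if_cong)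
  show "(\<Sum>k<n. cnj (givens a b c s k i) * givens a b c s k j) = (if i = j then 1 else 0)"
    unfolding sum_split_two[OF ab] rest using ab complex_of_real_sum_squares[OF cs]
    by (cases "i = a"; cases "i = b"; cases "j = a"; cases "j = b")
      (simp_all add: givens_def algebra_simps)
qed

lemma givens_inverse:
  assumes ab: "a < n" "b < n" "a \<noteq> b" and cs: "c\<^sup>2 + s\<^sup>2 = 1" and y: "\<forall>i\<ge>n. y i = 0"
  shows "mat_vec n (givens a b c (- s)) (mat_vec n (givens a b c s) y) = y"
proof
  fix i
  have "c * (c * y a - s * y b) + s * (s * y a + c * y b) = (c * c + s * s) * y a"
    "- s * (c * y a - s * y b) + c * (s * y a + c * y b) = (c * c + s * s) * y b"
    by (simp_all add: algebra_simps)
  then show "mat_vec n (givens a b c (- s)) (mat_vec n (givens a b c s) y) i = y i"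
    using ab complex_of_real_sum_squares[OF cs] y by (cases "i < n") (simp_all add: mat_vec_givens)
qed

lemma givens_fixes:
  assumes "a < n" "b < n" "a \<noteq> b" and "\<forall>i\<ge>n. y i = 0" "y a = 0" "y b = 0"
  shows "mat_vec n (givens a b c s) y = y"
  using assms by (auto simp: mat_vec_givens)

lemma proj_givens:
  assumes "a < n" "b < n" "a \<noteq> b" and "a \<in> S \<longleftrightarrow> b \<in> S"
  shows "proj S (mat_vec n (givens a b c s) y) = mat_vec n (givens a b c s) (proj S y)"
  using assms by (auto simp: mat_vec_givens proj_def)

abbreviation run_state :: "'a mmqfa \<Rightarrow> 'a option list \<Rightarrow> nat \<Rightarrow> complex" where
  "run_state M ss \<equiv> fst (run M ss)"

abbreviation run_acc :: "'a mmqfa \<Rightarrow> 'a option list \<Rightarrow> real" where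
  "run_acc M ss \<equiv> fst (snd (run M ss))"

lemma run_Nil: "run_state M [] = init_vec M" "run_acc M [] = 0"
  by (simp_all add: run_def)

lemma run_snoc:
  "run_state M (ss @ [s]) = proj (non_states M) (mat_vec (dim M) (trans M s) (run_state M ss))"
  "run_acc M (ss @ [s]) = run_acc M ss + norm2 (dim M) (proj (accs M) (mat_vec (dim M) (trans M s) (run_state M ss)))"
  by (simp_all add: run_def step_def Let_def split: prod.split)

lemma run_state_outside:
  assumes "wf_mmqfa M" "dim M \<le> i"
  shows "run_state M ss i = 0"
  using assms
  by (induct ss rule: rev_induct) (auto simp: run_Nil run_snoc init_vec_def wf_mmqfa_def proj_def mat_vec_def)

lemma run_acc_nonneg: "run_acc M ss \<ge> 0"
  by (induct ss rule: rev_induct) (simp_all add: run_Nil run_snoc norm2_def sum_nonneg)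

lemma acc_prob_nonneg: "acc_prob M x \<ge> 0"
  by (simp add: acc_prob_def run_acc_nonneg)

lemma run_acc_end_decisive:
  assumes "end_decisive M"
  shows "run_acc M (map Some w) = 0"
  using assms by (induct w rule: rev_induct) (simp_all add: run_Nil run_snoc end_decisive_def norm2_def)

lemma acc_prob_end_decisive:
  assumes "end_decisive M"
  shows "acc_prob M x = norm2 (dim M) (proj (accs M) (mat_vec (dim M) (trans M None) (run_state M (map Some x))))"
  by (simp add: acc_prob_def run_snoc run_acc_end_decisive[OF assms])

section \<open>Tensor products of automata\<close>

text \<open>The product halts as soon as one factor halts, and accepts only where both factors accept.\<close>

definition mmqfa_tensor :: "'a mmqfa \<Rightarrow> 'a mmqfa \<Rightarrow> 'a mmqfa" where
  "mmqfa_tensor A B = MMQFA (dim A * dim B) (\<lambda>s. kron_mat (dim B) (trans A s) (trans B s))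
     (init A * dim B + init B) (kron_set (dim A) (dim B) (accs A) (accs B))
     ({..<dim A * dim B} - kron_set (dim A) (dim B) (accs A) (accs B)
        - kron_set (dim A) (dim B) (non_states A) (non_states B))"

lemma mmqfa_tensor_simps [simp]:
  "dim (mmqfa_tensor A B) = dim A * dim B"
  "trans (mmqfa_tensor A B) s = kron_mat (dim B) (trans A s) (trans B s)"
  "init (mmqfa_tensor A B) = init A * dim B + init B"
  "accs (mmqfa_tensor A B) = kron_set (dim A) (dim B) (accs A) (accs B)"
  by (simp_all add: mmqfa_tensor_def)

lemma non_states_tensor:
  "wf_mmqfa A \<Longrightarrow> non_states (mmqfa_tensor A B) = kron_set (dim A) (dim B) (non_states A) (non_states B)"
  unfolding non_states_def mmqfa_tensor_def kron_set_def wf_mmqfa_def by auto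

lemma wf_tensor: "wf_mmqfa A \<Longrightarrow> wf_mmqfa B \<Longrightarrow> wf_mmqfa (mmqfa_tensor A B)"
  using unitary_kron pair_index_less unfolding wf_mmqfa_def mmqfa_tensor_def kron_set_def by auto

lemma init_vec_tensor:
  assumes "wf_mmqfa A" "wf_mmqfa B"
  shows "init_vec (mmqfa_tensor A B) = kron_vec (dim A) (dim B) (init_vec A) (init_vec B)"
proof
  fix x
  have "init A < dim A" "init B < dim B" using assms by (auto simp: wf_mmqfa_def)
  moreover have "x = init A * dim B + init B \<longleftrightarrow> x div dim B = init A \<and> x mod dim B = init B"
    using \<open>init B < dim B\<close> by (rule pair_index_eq_iff)
  ultimately show "init_vec (mmqfa_tensor A B) x = kron_vec (dim A) (dim B) (init_vec A) (init_vec B) x"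
    by (auto simp: init_vec_def kron_vec_def pair_index_less)
qed

lemma run_tensor:
  assumes A: "wf_mmqfa A" and B: "wf_mmqfa B" and ed: "end_decisive A"
  shows "run_state (mmqfa_tensor A B) (map Some w)
           = kron_vec (dim A) (dim B) (run_state A (map Some w)) (run_state B (map Some w))"
    and "run_acc (mmqfa_tensor A B) (map Some w) = 0"
proof (induct w rule: rev_induct)
  case Nil
  show "run_state (mmqfa_tensor A B) (map Some [])
      = kron_vec (dim A) (dim B) (run_state A (map Some [])) (run_state B (map Some []))"
    "run_acc (mmqfa_tensor A B) (map Some []) = 0"
    using init_vec_tensor[OF A B] by (simp_all add: run_Nil)
next
  case (snoc x xs)
  have no_acc: "proj (accs A) (mat_vec (dim A) (trans A (Some x)) (run_state A (map Some xs))) = (\<lambda>_. 0)"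
    using ed unfolding end_decisive_def by blast
  show "run_state (mmqfa_tensor A B) (map Some (xs @ [x]))
      = kron_vec (dim A) (dim B) (run_state A (map Some (xs @ [x]))) (run_state B (map Some (xs @ [x])))"
    "run_acc (mmqfa_tensor A B) (map Some (xs @ [x])) = 0"
    using snoc no_acc
    by (simp_all add: run_snoc mat_vec_kron non_states_tensor[OF A] proj_kron norm2_kron norm2_def)
qed

lemma end_decisive_tensor:
  assumes "wf_mmqfa A" "wf_mmqfa B" "end_decisive A"
  shows "end_decisive (mmqfa_tensor A B)"
  using assms(3) unfolding end_decisive_def
  by (simp add: run_tensor[OF assms] mat_vec_kron proj_kron)

lemma acc_prob_tensor:
  assumes "wf_mmqfa A" "wf_mmqfa B" "end_decisive A" "end_decisive B"
  shows "acc_prob (mmqfa_tensor A B) x = acc_prob A x * acc_prob B x"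
  using assms
  by (simp add: acc_prob_end_decisive end_decisive_tensor run_tensor mat_vec_kron proj_kron norm2_kron)

lemma mmqfa_power_exists:
  assumes "wf_mmqfa A" "end_decisive A" "0 < m"
  shows "\<exists>N. wf_mmqfa N \<and> end_decisive N \<and> (\<forall>x. acc_prob N x = acc_prob A x ^ m)"
  using \<open>0 < m\<close>
proof (induct m rule: nat_induct_non_zero)
  case 1
  show ?case using assms by auto
next
  case (Suc m)
  then obtain N where "wf_mmqfa N" "end_decisive N" "\<forall>x. acc_prob N x = acc_prob A x ^ m" by blast
  then show ?case
    using assms by (intro exI[of _ "mmqfa_tensor N A"]) (simp add: wf_tensor end_decisive_tensor acc_prob_tensor)
qed

section \<open>Non-halting initial states\<close>

text \<open>Each transition first applies a quarter turn
  in the plane of \<open>init A\<close> and \<open>dim A\<close>, sending the new initial state to \<open>init A\<close>.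
  This turn is invisible after the first step only because \<open>init A\<close> is halting, so that the
  states reached by \<open>A\<close> carry no amplitude on it.\<close>

definition fresh_init :: "'a mmqfa \<Rightarrow> 'a mmqfa" where
  "fresh_init A = MMQFA (dim A + 1)
     (\<lambda>s. mat_mult (dim A + 1) (block_diag (dim A) (trans A s) (\<lambda>_ _. 1)) (givens (init A) (dim A) 0 (- 1)))
     (dim A) (accs A) (rejs A)"

lemma fresh_init_simps [simp]:
  "dim (fresh_init A) = dim A + 1"
  "trans (fresh_init A) s
     = mat_mult (dim A + 1) (block_diag (dim A) (trans A s) (\<lambda>_ _. 1)) (givens (init A) (dim A) 0 (- 1))"
  "init (fresh_init A) = dim A"
  "accs (fresh_init A) = accs A"
  "rejs (fresh_init A) = rejs A"
  by (simp_all add: fresh_init_def)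

lemma non_states_fresh_init: "wf_mmqfa A \<Longrightarrow> non_states (fresh_init A) = insert (dim A) (non_states A)"
  unfolding non_states_def wf_mmqfa_def by auto

lemma wf_fresh_init:
  assumes "wf_mmqfa A"
  shows "wf_mmqfa (fresh_init A)"
proof -
  have "unitary_mat (dim A + 1) (block_diag (dim A) (trans A s) (\<lambda>_ _. 1))" for s
    using assms unitary_block_diag[of "dim A" "trans A s" 1] by (simp add: wf_mmqfa_def unitary_mat_def)
  moreover have "unitary_mat (dim A + 1) (givens (init A) (dim A) 0 (- 1))"
    using assms by (intro unitary_givens) (auto simp: wf_mmqfa_def)
  ultimately show ?thesis
    using assms unitary_mat_mult unfolding wf_mmqfa_def by auto
qed

lemma mat_vec_trans_fresh_init:
  assumes "wf_mmqfa A" and y: "\<forall>i\<ge>dim A. y i = 0"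
  shows "mat_vec (dim A + 1) (trans (fresh_init A) s) (mat_vec (dim A + 1) (givens (init A) (dim A) 0 1) y)
       = mat_vec (dim A) (trans A s) y"
proof -
  have "init A < dim A" using assms by (simp add: wf_mmqfa_def)
  then have "mat_vec (dim A + 1) (givens (init A) (dim A) 0 (- 1))
      (mat_vec (dim A + 1) (givens (init A) (dim A) 0 1) y) = y"
    using y by (intro givens_inverse) auto
  moreover have "dsum_vec (dim A) 1 y (\<lambda>_. 0) = y" "dsum_vec (dim A) 1 (mat_vec (dim A) (trans A s) y) (\<lambda>_. 0)
      = mat_vec (dim A) (trans A s) y"
    using y by (simp_all add: dsum_vec_zero_right mat_vec_outside)
  moreover have "mat_vec 1 (\<lambda>_ _. 1) (\<lambda>_. 0) = (\<lambda>_. 0)"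
    by (rule ext) (simp add: mat_vec_def)
  ultimately show ?thesis
    using mat_vec_block_diag[of "dim A" 1 "trans A s" "\<lambda>_ _. 1" y "\<lambda>_. 0"] by (simp add: mat_vec_mat_mult)
qed

lemma run_fresh_init:
  assumes A: "wf_mmqfa A" and halt: "init A \<notin> non_states A"
  shows "run_state (fresh_init A) ss = mat_vec (dim A + 1) (givens (init A) (dim A) 0 1) (run_state A ss)"
    and "run_acc (fresh_init A) ss = run_acc A ss"
proof (induct ss rule: rev_induct)
  case Nil
  have "init A < dim A" using A by (simp add: wf_mmqfa_def)
  then show "run_state (fresh_init A) [] = mat_vec (dim A + 1) (givens (init A) (dim A) 0 1) (run_state A [])"
    "run_acc (fresh_init A) [] = run_acc A []"
    by (auto simp: run_Nil init_vec_def mat_vec_givens)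
next
  case (snoc s ss)
  define z where "z = mat_vec (dim A) (trans A s) (run_state A ss)"
  have step: "mat_vec (dim (fresh_init A)) (trans (fresh_init A) s) (run_state (fresh_init A) ss) = z"
    unfolding snoc(1) z_def using mat_vec_trans_fresh_init[OF A] run_state_outside[OF A] by simp
  have "init A < dim A" "accs A \<subseteq> {..<dim A}" using A by (auto simp: wf_mmqfa_def)
  then have "proj (non_states (fresh_init A)) z
      = mat_vec (dim A + 1) (givens (init A) (dim A) 0 1) (proj (non_states A) z)"
    using halt by (subst givens_fixes) (auto simp: non_states_fresh_init[OF A] proj_def z_def mat_vec_outside)
  moreover have "norm2 (dim A + 1) (proj (accs A) z) = norm2 (dim A) (proj (accs A) z)"
    using \<open>accs A \<subseteq> {..<dim A}\<close> by (auto simp: norm2_def proj_def)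
  ultimately show "run_state (fresh_init A) (ss @ [s])
      = mat_vec (dim A + 1) (givens (init A) (dim A) 0 1) (run_state A (ss @ [s]))"
    "run_acc (fresh_init A) (ss @ [s]) = run_acc A (ss @ [s])"
    unfolding run_snoc step using snoc(2) by (simp_all add: z_def)
qed

lemma mmqfa_nonhalting_init_exists:
  assumes "wf_mmqfa A"
  shows "\<exists>N. wf_mmqfa N \<and> init N \<in> non_states N \<and> (\<forall>x. acc_prob N x = acc_prob A x)"
proof (cases "init A \<in> non_states A")
  case False
  then show ?thesis
    using assms run_fresh_init(2)[OF assms False]
    by (intro exI[of _ "fresh_init A"]) (simp add: wf_fresh_init non_states_fresh_init acc_prob_def)
qed (use assms in auto)

section \<open>Mixtures of automata\<close>

abbreviation mix_givens :: "'a mmqfa \<Rightarrow> 'a mmqfa \<Rightarrow> real \<Rightarrow> real \<Rightarrow> nat \<Rightarrow> nat \<Rightarrow> complex" where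
  "mix_givens A B c s \<equiv> givens (init A) (dim A + init B) c s"

text \<open>The rotation \<open>mix_givens A B c s\<close> turns the basis vector \<open>init A\<close> into \<open>c\<close> times itself plus
  \<open>s\<close> times the copy of \<open>init B\<close>, so the mixture runs \<open>A\<close> and \<open>B\<close> side by side in superposition.
  Conjugating the transitions by it does not disturb the measurements because both initial states
  are non-halting.\<close>

definition mmqfa_mix :: "'a mmqfa \<Rightarrow> 'a mmqfa \<Rightarrow> real \<Rightarrow> real \<Rightarrow> 'a mmqfa" where
  "mmqfa_mix A B c s = MMQFA (dim A + dim B)
     (\<lambda>\<sigma>. mat_mult (dim A + dim B) (mix_givens A B c (- s))
        (mat_mult (dim A + dim B) (block_diag (dim A) (trans A \<sigma>) (trans B \<sigma>)) (mix_givens A B c s)))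
     (init A) (accs A \<union> (+) (dim A) ` accs B) (rejs A \<union> (+) (dim A) ` rejs B)"

lemma mmqfa_mix_simps [simp]:
  "dim (mmqfa_mix A B c s) = dim A + dim B"
  "init (mmqfa_mix A B c s) = init A"
  "accs (mmqfa_mix A B c s) = accs A \<union> (+) (dim A) ` accs B"
  "rejs (mmqfa_mix A B c s) = rejs A \<union> (+) (dim A) ` rejs B"
  by (simp_all add: mmqfa_mix_def)

lemma non_states_mix:
  assumes "wf_mmqfa A" "wf_mmqfa B"
  shows "non_states (mmqfa_mix A B c s) = non_states A \<union> (+) (dim A) ` non_states B"
proof -
  have "x \<in> (+) (dim A) ` S \<longleftrightarrow> dim A \<le> x \<and> x - dim A \<in> S" for x S by force
  then show ?thesis
    using assms unfolding non_states_def wf_mmqfa_def by auto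
qed

lemma wf_mix:
  assumes A: "wf_mmqfa A" and B: "wf_mmqfa B" and cs: "c\<^sup>2 + s\<^sup>2 = 1"
  shows "wf_mmqfa (mmqfa_mix A B c s)"
proof -
  have ab: "init A < dim A + dim B" "dim A + init B < dim A + dim B" "init A \<noteq> dim A + init B"
    using A B by (auto simp: wf_mmqfa_def)
  have "unitary_mat (dim A + dim B) (trans (mmqfa_mix A B c s) \<sigma>)" for \<sigma>
    using A B cs unfolding mmqfa_mix_def
    by (auto intro!: unitary_mat_mult unitary_block_diag unitary_givens[OF ab] simp: wf_mmqfa_def)
  then show ?thesis
    using A B unfolding wf_mmqfa_def by auto
qed

lemma mat_vec_trans_mix:
  assumes A: "wf_mmqfa A" and B: "wf_mmqfa B" and cs: "c\<^sup>2 + s\<^sup>2 = 1"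
  shows "mat_vec (dim A + dim B) (trans (mmqfa_mix A B c s) \<sigma>)
           (mat_vec (dim A + dim B) (mix_givens A B c (- s)) (dsum_vec (dim A) (dim B) u v))
       = mat_vec (dim A + dim B) (mix_givens A B c (- s))
           (dsum_vec (dim A) (dim B) (mat_vec (dim A) (trans A \<sigma>) u) (mat_vec (dim B) (trans B \<sigma>) v))"
proof -
  have "init A < dim A + dim B" "dim A + init B < dim A + dim B" "init A \<noteq> dim A + init B"
    using A B by (auto simp: wf_mmqfa_def)
  then have "mat_vec (dim A + dim B) (mix_givens A B c s)
      (mat_vec (dim A + dim B) (mix_givens A B c (- s)) (dsum_vec (dim A) (dim B) u v))
      = dsum_vec (dim A) (dim B) u v"
    using givens_inverse[where s = "- s"] cs by (simp add: dsum_vec_def)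
  then show ?thesis
    by (simp add: mmqfa_mix_def mat_vec_mat_mult mat_vec_block_diag)
qed

lemma init_vec_mix:
  assumes A: "wf_mmqfa A" and B: "wf_mmqfa B" and cs: "c\<^sup>2 + s\<^sup>2 = 1"
  shows "init_vec (mmqfa_mix A B c s) = mat_vec (dim A + dim B) (mix_givens A B c (- s))
           (dsum_vec (dim A) (dim B) (scale_vec c (init_vec A)) (scale_vec s (init_vec B)))"
proof -
  have "init A < dim A" "init B < dim B" using A B by (auto simp: wf_mmqfa_def)
  then show ?thesis
    using complex_of_real_sum_squares[OF cs]
    by (intro ext) (auto simp: mat_vec_givens init_vec_def dsum_vec_def scale_vec_def algebra_simps)
qed

lemma run_mix:
  assumes A: "wf_mmqfa A" and B: "wf_mmqfa B" and cs: "c\<^sup>2 + s\<^sup>2 = 1"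
    and nonhalting: "init A \<in> non_states A" "init B \<in> non_states B"
  shows "run_state (mmqfa_mix A B c s) ss = mat_vec (dim A + dim B) (mix_givens A B c (- s))
           (dsum_vec (dim A) (dim B) (scale_vec c (run_state A ss)) (scale_vec s (run_state B ss)))"
    and "run_acc (mmqfa_mix A B c s) ss = c\<^sup>2 * run_acc A ss + s\<^sup>2 * run_acc B ss"
proof (induct ss rule: rev_induct)
  case Nil
  show "run_state (mmqfa_mix A B c s) [] = mat_vec (dim A + dim B) (mix_givens A B c (- s))
      (dsum_vec (dim A) (dim B) (scale_vec c (run_state A [])) (scale_vec s (run_state B [])))"
    "run_acc (mmqfa_mix A B c s) [] = c\<^sup>2 * run_acc A [] + s\<^sup>2 * run_acc B []"
    by (simp_all add: run_Nil init_vec_mix[OF A B cs])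
next
  case (snoc \<sigma> ss)
  let ?n = "dim A + dim B" and ?G = "mix_givens A B c (- s)"
  define zA where "zA = mat_vec (dim A) (trans A \<sigma>) (run_state A ss)"
  define zB where "zB = mat_vec (dim B) (trans B \<sigma>) (run_state B ss)"
  define z where "z = dsum_vec (dim A) (dim B) (scale_vec c zA) (scale_vec s zB)"
  have ab: "init A < ?n" "dim A + init B < ?n" "init A \<noteq> dim A + init B"
    using A B by (auto simp: wf_mmqfa_def)
  have sub: "non_states A \<subseteq> {..<dim A}" "accs A \<subseteq> {..<dim A}"
    using A by (auto simp: non_states_def wf_mmqfa_def)
  have step: "mat_vec (dim (mmqfa_mix A B c s)) (trans (mmqfa_mix A B c s) \<sigma>) (run_state (mmqfa_mix A B c s) ss)
      = mat_vec ?n ?G z"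
    unfolding snoc(1) z_def zA_def zB_def using mat_vec_trans_mix[OF A B cs] by (simp add: mat_vec_scale_vec)
  have "init A \<in> non_states (mmqfa_mix A B c s)" "dim A + init B \<in> non_states (mmqfa_mix A B c s)"
    using nonhalting by (auto simp: non_states_mix[OF A B])
  then have "proj (non_states (mmqfa_mix A B c s)) (mat_vec ?n ?G z)
      = mat_vec ?n ?G (dsum_vec (dim A) (dim B) (scale_vec c (proj (non_states A) zA))
          (scale_vec s (proj (non_states B) zB)))"
    by (simp add: proj_givens[OF ab] z_def non_states_mix[OF A B] proj_dsum_vec[OF sub(1)] proj_scale_vec)
  moreover have "init A \<notin> accs (mmqfa_mix A B c s)" "dim A + init B \<notin> accs (mmqfa_mix A B c s)"
    using nonhalting sub by (auto simp: non_states_def)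
  then have "norm2 ?n (proj (accs (mmqfa_mix A B c s)) (mat_vec ?n ?G z))
      = c\<^sup>2 * norm2 (dim A) (proj (accs A) zA) + s\<^sup>2 * norm2 (dim B) (proj (accs B) zB)"
    using unitary_givens[OF ab] cs
    by (simp add: proj_givens[OF ab] norm2_unitary z_def proj_dsum_vec[OF sub(2)] proj_scale_vec
        norm2_dsum_vec norm2_scale_vec)
  ultimately show "run_state (mmqfa_mix A B c s) (ss @ [\<sigma>]) = mat_vec ?n ?G
      (dsum_vec (dim A) (dim B) (scale_vec c (run_state A (ss @ [\<sigma>]))) (scale_vec s (run_state B (ss @ [\<sigma>]))))"
    "run_acc (mmqfa_mix A B c s) (ss @ [\<sigma>]) = c\<^sup>2 * run_acc A (ss @ [\<sigma>]) + s\<^sup>2 * run_acc B (ss @ [\<sigma>])"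
    unfolding run_snoc step using snoc(2) by (simp_all add: zA_def zB_def algebra_simps)
qed

lemma mmqfa_mix_exists:
  assumes "wf_mmqfa A" "wf_mmqfa B" "0 \<le> w" "w \<le> 1"
  shows "\<exists>N. wf_mmqfa N \<and> (\<forall>x. acc_prob N x = w * acc_prob A x + (1 - w) * acc_prob B x)"
proof -
  obtain A' where A': "wf_mmqfa A'" "init A' \<in> non_states A'" "\<forall>x. acc_prob A' x = acc_prob A x"
    using mmqfa_nonhalting_init_exists[OF assms(1)] by blast
  obtain B' where B': "wf_mmqfa B'" "init B' \<in> non_states B'" "\<forall>x. acc_prob B' x = acc_prob B x"
    using mmqfa_nonhalting_init_exists[OF assms(2)] by blast
  have cs: "(sqrt w)\<^sup>2 + (sqrt (1 - w))\<^sup>2 = 1"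
    using assms by simp
  show ?thesis
    using assms A' B' run_mix(2)[OF A'(1) B'(1) cs A'(2) B'(2)]
    by (intro exI[of _ "mmqfa_mix A' B' (sqrt w) (sqrt (1 - w))"]) (simp add: wf_mix[OF A'(1) B'(1) cs] acc_prob_def)
qed

section \<open>Separation by acceptance probabilities\<close>

definition separates :: "('x \<Rightarrow> real) \<Rightarrow> 'x set \<Rightarrow> real \<Rightarrow> real \<Rightarrow> bool" where
  "separates f L a b \<longleftrightarrow> b < a \<and> (\<forall>x\<in>L. a < f x) \<and> (\<forall>x. x \<notin> L \<longrightarrow> f x < b)"

lemma accepts_bounded_iff_separates: "accepts_bounded M L \<longleftrightarrow> (\<exists>a b. separates (acc_prob M) L a b)"
proof
  assume "accepts_bounded M L"
  then obtain lam eps where "eps > 0" "\<forall>x\<in>L. lam + eps < acc_prob M x" "\<forall>x. x \<notin> L \<longrightarrow> acc_prob M x < lam - eps"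
    unfolding accepts_bounded_def by blast
  then have "separates (acc_prob M) L (lam + eps) (lam - eps)"
    by (simp add: separates_def)
  then show "\<exists>a b. separates (acc_prob M) L a b" by blast
next
  assume "\<exists>a b. separates (acc_prob M) L a b"
  then obtain a b where "separates (acc_prob M) L a b" by blast
  then have "(a - b) / 2 > 0 \<and> (\<forall>x. x \<in> L \<longrightarrow> acc_prob M x > (a + b) / 2 + (a - b) / 2)
      \<and> (\<forall>x. x \<notin> L \<longrightarrow> acc_prob M x < (a + b) / 2 - (a - b) / 2)"
    by (auto simp: separates_def field_simps)
  then show "accepts_bounded M L"
    unfolding accepts_bounded_def by blast
qed

lemma exists_powers_sum_less_one:
  fixes r r' :: real
  assumes "0 \<le> r" "r < 1" "0 \<le> r'" "r' < 1"
  shows "\<exists>m>0. r ^ m + r' ^ m < 1"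
proof -
  have "(\<lambda>m. r ^ m + r' ^ m) \<longlonglongrightarrow> 0"
    using assms tendsto_add_zero[OF LIMSEQ_power_zero LIMSEQ_power_zero, of r r'] by simp
  then have "\<forall>\<^sub>F m in sequentially. r ^ m + r' ^ m < 1"
    by (rule order_tendstoD(2)) simp
  then have "\<forall>\<^sub>F m in sequentially. 0 < m \<and> r ^ m + r' ^ m < 1"
    by (intro eventually_conj eventually_gt_at_top)
  then show ?thesis
    using eventually_happens'[OF sequentially_bot] by blast
qed

lemma separates_power:
  assumes "\<And>x. 0 \<le> f x" "separates f L a b" "0 \<le> b" "0 < m"
  shows "separates (\<lambda>x. f x ^ m) L (a ^ m) (b ^ m)"
  using assms unfolding separates_def by (auto intro!: power_strict_mono)

lemma separates_union_mixture:
  fixes p q :: "'x \<Rightarrow> real"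
  assumes nonneg: "\<And>x. 0 \<le> p x" "\<And>x. 0 \<le> q x"
    and sep: "separates p L a b" "separates q L' a' b'" and pos: "0 < b" "0 < b'"
    and small: "b / a + b' / a' < 1"
  shows "\<exists>w a'' b''. 0 \<le> w \<and> w \<le> 1 \<and> separates (\<lambda>x. w * p x + (1 - w) * q x) (L \<union> L') a'' b''"
proof -
  have "0 < a" "0 < a'" using sep pos by (auto simp: separates_def)
  define w where "w = a' / (a + a')"
  define T where "T = a * a' / (a + a')"
  have w: "0 < w" "w < 1" "1 - w = a / (a + a')"
    using \<open>0 < a\<close> \<open>0 < a'\<close> by (simp_all add: w_def field_simps)
  have T: "0 < T" "w * a = T" "(1 - w) * a' = T"
    using \<open>0 < a\<close> \<open>0 < a'\<close> w(3) by (simp_all add: T_def w_def)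
  have "separates (\<lambda>x. w * p x + (1 - w) * q x) (L \<union> L') T (T * (b / a + b' / a'))"
    unfolding separates_def
  proof (intro conjI ballI allI impI)
    show "T * (b / a + b' / a') < T" using T(1) small by simp
  next
    fix x assume x: "x \<in> L \<union> L'"
    have "0 \<le> w * p x" "0 \<le> (1 - w) * q x" using nonneg[of x] w(1,2) by simp_all
    moreover have "T < w * p x \<or> T < (1 - w) * q x"
    proof (cases "x \<in> L")
      case True
      then have "a < p x" using sep(1) by (simp add: separates_def)
      then show ?thesis using mult_strict_left_mono[of a "p x" w] w(1) T(2) by simp
    next
      case False
      then have "a' < q x" using x sep(2) by (simp add: separates_def)
      then show ?thesis using mult_strict_left_mono[of a' "q x" "1 - w"] w(2) T(3) by simp
    qed
    ultimately show "T < w * p x + (1 - w) * q x" by linarith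
  next
    fix x assume "x \<notin> L \<union> L'"
    then have "w * p x + (1 - w) * q x < w * b + (1 - w) * b'"
      using sep w(1,2) unfolding separates_def by (intro add_strict_mono mult_strict_left_mono) auto
    also have "w * b = T * (b / a)" using \<open>0 < a\<close> by (simp flip: T(2))
    also have "(1 - w) * b' = T * (b' / a')" using \<open>0 < a'\<close> by (simp flip: T(3))
    finally show "w * p x + (1 - w) * q x < T * (b / a + b' / a')"
      by (simp add: distrib_left)
  qed
  then show ?thesis using w(1,2) less_imp_le by blast
qed

lemma power_mixture_separates_union:
  fixes p q :: "'x \<Rightarrow> real"
  assumes nonneg: "\<And>x. 0 \<le> p x" "\<And>x. 0 \<le> q x"
    and sep: "separates p L a b" "separates q L' a' b'" and pos: "0 < b" "0 < b'"
  shows "\<exists>m w. 0 < m \<and> 0 \<le> w \<and> w \<le> 1 \<and>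
           (\<exists>a'' b''. separates (\<lambda>x. w * p x ^ m + (1 - w) * q x ^ m) (L \<union> L') a'' b'')"
proof -
  have "b < a" "b' < a'" using sep by (simp_all add: separates_def)
  then obtain m where m: "0 < m" "(b / a) ^ m + (b' / a') ^ m < 1"
    using pos exists_powers_sum_less_one[of "b / a" "b' / a'"] by auto
  have "separates (\<lambda>x. p x ^ m) L (a ^ m) (b ^ m)" "separates (\<lambda>x. q x ^ m) L' (a' ^ m) (b' ^ m)"
    using nonneg sep pos m(1) by (simp_all add: separates_power less_imp_le)
  with nonneg pos m show ?thesis
    using separates_union_mixture[of "\<lambda>x. p x ^ m" "\<lambda>x. q x ^ m" L "a ^ m" "b ^ m" L' "a' ^ m" "b' ^ m"]
    by (auto simp: power_divide)
qed

lemma accepts_bounded_UNIV: "accepts_bounded M UNIV"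
proof -
  have "- 1 < acc_prob M x" for x using acc_prob_nonneg[of M x] by linarith
  then have "separates (acc_prob M) UNIV (- 1) (- 2)" by (simp add: separates_def)
  then show ?thesis unfolding accepts_bounded_iff_separates by blast
qed

theorem lemma4p11:
  fixes M M' :: "'a mmqfa" and L L' :: "'a list set"
  assumes "wf_mmqfa M" and "end_decisive M" and "accepts_bounded M L"
    and "wf_mmqfa M'" and "end_decisive M'" and "accepts_bounded M' L'"
  shows "\<exists>M'' :: 'a mmqfa. wf_mmqfa M'' \<and> accepts_bounded M'' (L \<union> L')"
proof (cases "L = UNIV \<or> L' = UNIV")
  case True
  then show ?thesis using assms(1) accepts_bounded_UNIV[of M] by auto
next
  case False
  then obtain x x' where "x \<notin> L" "x' \<notin> L'" by auto
  obtain a b a' b' where sep: "separates (acc_prob M) L a b" "separates (acc_prob M') L' a' b'"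
    using assms(3,6) unfolding accepts_bounded_iff_separates by blast
  have "0 < b" using sep(1) \<open>x \<notin> L\<close> acc_prob_nonneg[of M x] by (auto simp: separates_def)
  have "0 < b'" using sep(2) \<open>x' \<notin> L'\<close> acc_prob_nonneg[of M' x'] by (auto simp: separates_def)
  obtain m w a'' b'' where "0 < m" "0 \<le> w" "w \<le> 1"
    and sep'': "separates (\<lambda>x. w * acc_prob M x ^ m + (1 - w) * acc_prob M' x ^ m) (L \<union> L') a'' b''"
    using power_mixture_separates_union[OF acc_prob_nonneg acc_prob_nonneg sep \<open>0 < b\<close> \<open>0 < b'\<close>] by blast
  obtain P where P: "wf_mmqfa P" "\<forall>x. acc_prob P x = acc_prob M x ^ m"
    using mmqfa_power_exists[OF assms(1,2) \<open>0 < m\<close>] by blast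
  obtain P' where P': "wf_mmqfa P'" "\<forall>x. acc_prob P' x = acc_prob M' x ^ m"
    using mmqfa_power_exists[OF assms(4,5) \<open>0 < m\<close>] by blast
  obtain N where N: "wf_mmqfa N" "\<forall>x. acc_prob N x = w * acc_prob P x + (1 - w) * acc_prob P' x"
    using mmqfa_mix_exists[OF P(1) P'(1) \<open>0 \<le> w\<close> \<open>w \<le> 1\<close>] by blast
  have "separates (acc_prob N) (L \<union> L') a'' b''"
    using sep'' N(2) P(2) P'(2) by (simp add: separates_def)
  with N(1) show ?thesis
    unfolding accepts_bounded_iff_separates by blast
qed

end
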